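(* Let $p=p(m)$ with $m/p\to c\in(0,\infty)$ as $m,p\to\infty$. For each $m$ let $\mathbf{A}_m$ be a deterministic real $m\times p$ matrix with nonnegative entries such that $\frac{1}{mp}\operatorname{tr}(\mathbf{A}_m\mathbf{A}_m^\top)$ is uniformly bounded in $m$. Fix an integer $n\ge 2$ and $\sigma^2>0$, and for $k=1,\dots,n$ let $\tilde{\mathbf{A}}_m^k=\mathbf{A}_m+\sigma\mathbf{E}_m^k$, where $\mathbf{E}_m^1,\dots,\mathbf{E}_m^n$ are independent random $m\times p$ matrices with i.i.d. entries of mean zero, variance one and finite fourth moment. Let $\bar{\mathbf{A}}_m=\frac1n\sum_{k=1}^n\tilde{\mathbf{A}}_m^k$ and let $\mathbf{U}_m$ be the $m\times p$ matrix of all ones. Then, as $m,p\to\infty$ with $m/p\to c$, $$\Big|\tfrac1{mp}\operatorname{tr}(\bar{\mathbf{A}}_{m} \mathbf{U}_{m}^\top)-\tfrac1{mp}\operatorname{tr}(\mathbf{A}_{m} \mathbf{U}_{m}^\top)\Big|\xrightarrow{a.s.}0,\qquad \Big|\tfrac1{mp}\operatorname{tr}(\bar{\mathbf{A}}_{m} \mathbf{A}_{m}^\top)-\tfrac1{mp}\operatorname{tr}(\mathbf{A}_{m} \mathbf{A}_{m}^\top)\Big|\xrightarrow{a.s.}0,$$ $$\Big|\tfrac1{mp}\operatorname{tr}(\bar{\mathbf{A}}_{m} \bar{\mathbf{A}}^\top_{m})-\tfrac1{mp}\operatorname{tr}(\mathbf{A}_{m} \mathbf{A}_{m}^\top)-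\tfrac{\sigma^2}{n}\Big|\xrightarrow{a.s.}0.$$
   Context: The paper writes $\tilde X_{m,p}\overset{a.e.}{\sim}X_{m,p}$ ("asymptotic deterministic equivalent") to mean $|\tilde X_{m,p}-X_{m,p}|\to0$ almost surely as $m,p\to\infty$ with $m/p\to c\in(0,\infty)$, for a random sequence $\tilde X_{m,p}$ and a deterministic sequence $X_{m,p}$; the claim states the three resulting relations explicitly. *)

theory Defs
  imports "HOL-Probability.Probability"
begin

text \<open>Real m x p matrices are represented as functions nat => nat => real,
  only entries with i < m and j < p being relevant.
  trace_XYt m p X Y is tr(X Y^T) = sum over i<m, j<p of X i j * Y i j.\<close>
definition trace_XYt :: "nat \<Rightarrow> nat \<Rightarrow> (nat \<Rightarrow> nat \<Rightarrow> real) \<Rightarrow> (nat \<Rightarrow> nat \<Rightarrow> real) \<Rightarrow> real" where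
  "trace_XYt m p X Y = (\<Sum>i<m. \<Sum>j<p. X i j * Y i j)"

definition ones_mat :: "nat \<Rightarrow> nat \<Rightarrow> real" where
  "ones_mat i j = 1"

end

theory Submission
  imports Defs
begin

text \<open>
  Write Ebar for the average of the n noise matrices, so that Abar = A + sigma Ebar and the three
  differences are linear combinations of tr(Ebar U^T)/(mp), tr(Ebar A^T)/(mp) and
  tr(Ebar Ebar^T)/(mp) - 1/n. Each of these is a normalised sum of independent centred variables
  (the noise entries with deterministic weights, resp. the squares Ebar_ij^2 - 1/n, whose variance
  is controlled by the fourth moment), so its second moment is O(1/(mp)) = O(1/m^2). These bounds
  are summable, so the series of squares has finite expectation and the convergence is almost sure;
  no independence between different m is needed, and neither is the nonnegativity of A.
\<close>

lemma (in prob_space) AE_tendsto_zero_if_summable_second_moments: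
  fixes X :: "nat \<Rightarrow> 'a \<Rightarrow> real"
  assumes meas: "\<And>m. X m \<in> borel_measurable M"
    and int: "\<And>m. integrable M (\<lambda>\<omega>. (X m \<omega>)\<^sup>2)"
    and summ: "summable (\<lambda>m. expectation (\<lambda>\<omega>. (X m \<omega>)\<^sup>2))"
  shows "AE \<omega> in M. (\<lambda>m. X m \<omega>) \<longlonglongrightarrow> 0"
proof -
  have "(\<integral>\<^sup>+\<omega>. (\<Sum>m. ennreal ((X m \<omega>)\<^sup>2)) \<partial>M) = (\<Sum>m. \<integral>\<^sup>+\<omega>. ennreal ((X m \<omega>)\<^sup>2) \<partial>M)"
    by (rule nn_integral_suminf) (use meas in measurable)
  also have "\<dots> = (\<Sum>m. ennreal (expectation (\<lambda>\<omega>. (X m \<omega>)\<^sup>2)))"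
    by (subst nn_integral_eq_integral[OF int]) auto
  also have "\<dots> \<noteq> \<top>"
    by (rule ennreal_suminf_neq_top[OF summ]) auto
  finally have "AE \<omega> in M. (\<Sum>m. ennreal ((X m \<omega>)\<^sup>2)) \<noteq> \<infinity>"
    by (intro nn_integral_PInf_AE) (use meas in measurable)
  then show ?thesis
  proof eventually_elim
    case (elim \<omega>)
    then have "summable (\<lambda>m. (X m \<omega>)\<^sup>2)"
      by (intro summable_suminf_not_top) auto
    then have "(\<lambda>m. (X m \<omega>)\<^sup>2) \<longlonglongrightarrow> 0"
      by (rule summable_LIMSEQ_zero)
    then show ?case
      by simp
  qed
qed

lemma (in prob_space) indep_var_compose_restrict:
  assumes "indep_vars (\<lambda>_. borel) X I" "A \<inter> B = {}" "A \<subseteq> I" "B \<subseteq> I"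
    and "f \<in> borel_measurable (PiM A (\<lambda>_. borel))" "g \<in> borel_measurable (PiM B (\<lambda>_. borel))"
  shows "indep_var borel (\<lambda>\<omega>. f (\<lambda>i\<in>A. X i \<omega>)) borel (\<lambda>\<omega>. g (\<lambda>i\<in>B. X i \<omega>))"
  using indep_var_compose[OF indep_var_restrict[OF assms(1-4)] assms(5,6)]
  by (simp add: comp_def)

lemma (in prob_space) expectation_square_sum_indep_centered:
  fixes Y :: "'i \<Rightarrow> 'a \<Rightarrow> real"
  assumes fin: "finite T"
    and int: "\<And>t. t \<in> T \<Longrightarrow> integrable M (Y t)"
    and int_sq: "\<And>t. t \<in> T \<Longrightarrow> integrable M (\<lambda>\<omega>. (Y t \<omega>)\<^sup>2)"
    and centered: "\<And>t. t \<in> T \<Longrightarrow> expectation (Y t) = 0"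
    and indep: "\<And>s t. s \<in> T \<Longrightarrow> t \<in> T \<Longrightarrow> s \<noteq> t \<Longrightarrow> indep_var borel (Y s) borel (Y t)"
  shows "integrable M (\<lambda>\<omega>. (\<Sum>t\<in>T. Y t \<omega>)\<^sup>2)"
    and "expectation (\<lambda>\<omega>. (\<Sum>t\<in>T. Y t \<omega>)\<^sup>2) = (\<Sum>t\<in>T. expectation (\<lambda>\<omega>. (Y t \<omega>)\<^sup>2))"
proof -
  have square: "(\<lambda>\<omega>. (\<Sum>t\<in>T. Y t \<omega>)\<^sup>2) = (\<lambda>\<omega>. \<Sum>s\<in>T. \<Sum>t\<in>T. Y s \<omega> * Y t \<omega>)"
    by (simp add: power2_eq_square sum_product)
  have product: "integrable M (\<lambda>\<omega>. Y s \<omega> * Y t \<omega>) \<and>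
      expectation (\<lambda>\<omega>. Y s \<omega> * Y t \<omega>) = (if s = t then expectation (\<lambda>\<omega>. (Y s \<omega>)\<^sup>2) else 0)"
    if "s \<in> T" "t \<in> T" for s t
  proof (cases "s = t")
    case True
    then show ?thesis
      using int_sq[OF \<open>s \<in> T\<close>] by (simp add: power2_eq_square)
  next
    case False
    then show ?thesis
      using indep[OF that False] int that centered
      by (simp add: indep_var_integrable indep_var_lebesgue_integral)
  qed
  show "integrable M (\<lambda>\<omega>. (\<Sum>t\<in>T. Y t \<omega>)\<^sup>2)"
    unfolding square using product by (intro Bochner_Integration.integrable_sum) auto
  have "expectation (\<lambda>\<omega>. (\<Sum>t\<in>T. Y t \<omega>)\<^sup>2)
      = (\<Sum>s\<in>T. \<Sum>t\<in>T. expectation (\<lambda>\<omega>. Y s \<omega> * Y t \<omega>))"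
    unfolding square using product by (simp add: integrable_sum)
  also have "\<dots> = (\<Sum>s\<in>T. \<Sum>t\<in>T. if s = t then expectation (\<lambda>\<omega>. (Y s \<omega>)\<^sup>2) else 0)"
    using product by (intro sum.cong) auto
  also have "\<dots> = (\<Sum>t\<in>T. expectation (\<lambda>\<omega>. (Y t \<omega>)\<^sup>2))"
    using fin by simp
  finally show "expectation (\<lambda>\<omega>. (\<Sum>t\<in>T. Y t \<omega>)\<^sup>2) = (\<Sum>t\<in>T. expectation (\<lambda>\<omega>. (Y t \<omega>)\<^sup>2))" .
qed

lemma
  fixes X Y :: "'a \<Rightarrow> real" and f :: "real \<Rightarrow> real"
  assumes distr: "distr M borel X = distr M borel Y"
    and [measurable]: "X \<in> borel_measurable M" "Y \<in> borel_measurable M" "f \<in> borel_measurable borel"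
  shows integrable_comp_eq_if_distr_eq: "integrable M (\<lambda>x. f (X x)) \<longleftrightarrow> integrable M (\<lambda>x. f (Y x))"
    and integral_comp_eq_if_distr_eq: "(\<integral>x. f (X x) \<partial>M) = (\<integral>x. f (Y x) \<partial>M)"
proof -
  show "integrable M (\<lambda>x. f (X x)) \<longleftrightarrow> integrable M (\<lambda>x. f (Y x))"
    using integrable_distr_eq[of X M borel f] integrable_distr_eq[of Y M borel f] distr by simp
  show "(\<integral>x. f (X x) \<partial>M) = (\<integral>x. f (Y x) \<partial>M)"
    using integral_distr[of X M borel f] integral_distr[of Y M borel f] distr by simp
qed

lemma mean_power4_le:
  fixes x :: "'i \<Rightarrow> real"
  shows "((\<Sum>i\<in>I. x i) / card I) ^ 4 \<le> (\<Sum>i\<in>I. x i ^ 4) / card I"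
proof -
  have quadratic_mean: "((\<Sum>i\<in>I. y i) / card I)\<^sup>2 \<le> (\<Sum>i\<in>I. (y i)\<^sup>2) / card I"
    for y :: "'i \<Rightarrow> real"
    using sum_squared_le_sum_of_squares[of y I]
    by (cases "card I = 0") (simp_all add: power_divide field_simps power2_eq_square)
  have "((\<Sum>i\<in>I. x i) / card I) ^ 4 = (((\<Sum>i\<in>I. x i) / card I)\<^sup>2)\<^sup>2"
    by simp
  also have "\<dots> \<le> ((\<Sum>i\<in>I. (x i)\<^sup>2) / card I)\<^sup>2"
    using quadratic_mean by (intro power_mono) auto
  also have "\<dots> \<le> (\<Sum>i\<in>I. x i ^ 4) / card I"
    using quadratic_mean[of "\<lambda>i. (x i)\<^sup>2"] by simp
  finally show ?thesis .
qed

lemma summable_inverse_mult_if_ratio_converges: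
  fixes p :: "nat \<Rightarrow> nat"
  assumes "(\<lambda>m. real m / real (p m)) \<longlonglongrightarrow> c"
  shows "summable (\<lambda>m. 1 / (real m * real (p m)))"
proof (rule summable_comparison_test_ev)
  have "eventually (\<lambda>m. real m / real (p m) < c + 1) sequentially"
    using order_tendstoD(2)[OF assms] by simp
  then show "eventually (\<lambda>m. norm (1 / (real m * real (p m))) \<le> (c + 1) * inverse (real m ^ 2)) sequentially"
  proof eventually_elim
    case (elim m)
    have "1 / (real m * real (p m)) = (real m / real (p m)) / (real m)\<^sup>2"
      by (cases "m = 0") (simp_all add: power2_eq_square)
    also have "\<dots> \<le> (c + 1) / (real m)\<^sup>2"
      using elim by (intro divide_right_mono) auto
    finally show ?case
      by (simp add: divide_inverse)
  qed
  show "summable (\<lambda>m. (c + 1) * inverse (real m ^ 2))"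
    by (intro summable_mult inverse_power_summable) simp
qed

lemma trace_XYt_add_scaled_left:
  "trace_XYt m p (\<lambda>i j. X i j + s * Y i j) Z = trace_XYt m p X Z + s * trace_XYt m p Y Z"
  by (simp add: trace_XYt_def distrib_right sum.distrib sum_distrib_left mult.assoc)

lemma trace_XYt_add_scaled_square:
  "trace_XYt m p (\<lambda>i j. X i j + s * Y i j) (\<lambda>i j. X i j + s * Y i j)
     = trace_XYt m p X X + 2 * s * trace_XYt m p Y X + s\<^sup>2 * trace_XYt m p Y Y"
  by (simp add: trace_XYt_def sum.distrib sum_distrib_left power2_eq_square algebra_simps)

locale iid_noise = prob_space M for M :: "'a measure" +
  fixes n :: nat and p :: "nat \<Rightarrow> nat"
    and E :: "nat \<Rightarrow> nat \<Rightarrow> nat \<Rightarrow> nat \<Rightarrow> 'a \<Rightarrow> real" and \<xi> :: "'a \<Rightarrow> real"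
  assumes n_pos: "n > 0"
    and \<xi>_rv [measurable]: "\<xi> \<in> borel_measurable M"
    and \<xi>_integrable: "integrable M \<xi>" and \<xi>_mean: "expectation \<xi> = 0"
    and \<xi>_sq_integrable: "integrable M (\<lambda>x. (\<xi> x)\<^sup>2)"
    and \<xi>_var: "expectation (\<lambda>x. (\<xi> x)\<^sup>2) = 1"
    and \<xi>_4th_integrable: "integrable M (\<lambda>x. (\<xi> x) ^ 4)"
    and E_rv [measurable]: "\<And>m k i j. E m k i j \<in> borel_measurable M"
    and E_distr: "\<And>m k i j. k < n \<Longrightarrow> i < m \<Longrightarrow> j < p m \<Longrightarrow>
                    distr M borel (E m k i j) = distr M borel \<xi>"
    and E_indep: "\<And>m. indep_vars (\<lambda>_. borel) (\<lambda>(k, i, j). E m k i j)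
                         ({..<n} \<times> {..<m} \<times> {..<p m})"
begin

definition noise_index :: "nat \<Rightarrow> (nat \<times> nat \<times> nat) set" where
  "noise_index m = {..<n} \<times> {..<m} \<times> {..<p m}"

definition noise :: "nat \<Rightarrow> nat \<times> nat \<times> nat \<Rightarrow> 'a \<Rightarrow> real" where
  "noise m = (\<lambda>(k, i, j). E m k i j)"

definition noise_mean :: "nat \<Rightarrow> 'a \<Rightarrow> nat \<Rightarrow> nat \<Rightarrow> real" where
  "noise_mean m \<omega> i j = (\<Sum>k<n. E m k i j \<omega>) / n"

lemma noise_measurable [measurable]: "noise m t \<in> borel_measurable M"
  by (cases t) (simp add: noise_def)

lemma noise_mean_measurable [measurable]: "(\<lambda>\<omega>. noise_mean m \<omega> i j) \<in> borel_measurable M"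
  unfolding noise_mean_def by measurable

lemma finite_noise_index [simp]: "finite (noise_index m)"
  by (simp add: noise_index_def)

lemma sum_noise_index:
  "(\<Sum>t\<in>noise_index m. f t) = (\<Sum>i<m. \<Sum>j<p m. \<Sum>k<n. f (k, i, j))"
proof -
  have "(\<Sum>t\<in>noise_index m. f t) = (\<Sum>k<n. \<Sum>i<m. \<Sum>j<p m. f (k, i, j))"
    by (simp add: noise_index_def sum.cartesian_product)
  also have "\<dots> = (\<Sum>i<m. \<Sum>j<p m. \<Sum>k<n. f (k, i, j))"
    by (subst sum.swap) (simp add: sum.swap[of _ "{..<n}"])
  finally show ?thesis .
qed

lemma noise_moments:
  assumes "t \<in> noise_index m"
  shows "integrable M (noise m t)" "expectation (noise m t) = 0"
    and "integrable M (\<lambda>\<omega>. (noise m t \<omega>)\<^sup>2)" "expectation (\<lambda>\<omega>. (noise m t \<omega>)\<^sup>2) = 1"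
    and "integrable M (\<lambda>\<omega>. (noise m t \<omega>) ^ 4)"
    and "expectation (\<lambda>\<omega>. (noise m t \<omega>) ^ 4) = expectation (\<lambda>x. (\<xi> x) ^ 4)"
proof -
  obtain k i j where t: "t = (k, i, j)" "k < n" "i < m" "j < p m"
    using assms by (auto simp: noise_index_def)
  have distr: "distr M borel (noise m t) = distr M borel \<xi>"
    using E_distr t by (simp add: noise_def)
  note integrable = integrable_comp_eq_if_distr_eq[OF distr noise_measurable \<xi>_rv]
  note integral = integral_comp_eq_if_distr_eq[OF distr noise_measurable \<xi>_rv]
  show "integrable M (noise m t)" "expectation (noise m t) = 0"
    using integrable[of "\<lambda>x. x"] integral[of "\<lambda>x. x"] \<xi>_integrable \<xi>_mean by simp_all
  show "integrable M (\<lambda>\<omega>. (noise m t \<omega>)\<^sup>2)" "expectation (\<lambda>\<omega>. (noise m t \<omega>)\<^sup>2) = 1"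
    using integrable[of "\<lambda>x. x\<^sup>2"] integral[of "\<lambda>x. x\<^sup>2"] \<xi>_sq_integrable \<xi>_var by simp_all
  show "integrable M (\<lambda>\<omega>. (noise m t \<omega>) ^ 4)"
    "expectation (\<lambda>\<omega>. (noise m t \<omega>) ^ 4) = expectation (\<lambda>x. (\<xi> x) ^ 4)"
    using integrable[of "\<lambda>x. x ^ 4"] integral[of "\<lambda>x. x ^ 4"] \<xi>_4th_integrable by simp_all
qed

lemma indep_noise_blocks:
  assumes "S \<inter> T = {}" "S \<subseteq> noise_index m" "T \<subseteq> noise_index m"
    and "f \<in> borel_measurable (PiM S (\<lambda>_. borel))" "g \<in> borel_measurable (PiM T (\<lambda>_. borel))"
  shows "indep_var borel (\<lambda>\<omega>. f (\<lambda>t\<in>S. noise m t \<omega>)) borel (\<lambda>\<omega>. g (\<lambda>t\<in>T. noise m t \<omega>))"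
  using E_indep[of m] assms unfolding noise_def noise_index_def
  by (rule indep_var_compose_restrict)

lemma noise_combination_second_moment:
  assumes "T \<subseteq> noise_index m"
  shows "integrable M (\<lambda>\<omega>. (\<Sum>t\<in>T. a t * noise m t \<omega>)\<^sup>2)"
    and "expectation (\<lambda>\<omega>. (\<Sum>t\<in>T. a t * noise m t \<omega>)\<^sup>2) = (\<Sum>t\<in>T. (a t)\<^sup>2)"
proof -
  have T: "finite T" "\<And>t. t \<in> T \<Longrightarrow> t \<in> noise_index m"
    using assms finite_subset[OF assms] by auto
  have indep: "indep_var borel (\<lambda>\<omega>. a s * noise m s \<omega>) borel (\<lambda>\<omega>. a t * noise m t \<omega>)"
    if "s \<in> T" "t \<in> T" "s \<noteq> t" for s t
    using indep_noise_blocks[of "{s}" "{t}" m "\<lambda>v. a s * v s" "\<lambda>v. a t * v t"] that T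
    by simp
  note sum_sq = expectation_square_sum_indep_centered[of T "\<lambda>t \<omega>. a t * noise m t \<omega>"]
  show "integrable M (\<lambda>\<omega>. (\<Sum>t\<in>T. a t * noise m t \<omega>)\<^sup>2)"
    using sum_sq(1) T indep noise_moments by (simp add: power_mult_distrib)
  show "expectation (\<lambda>\<omega>. (\<Sum>t\<in>T. a t * noise m t \<omega>)\<^sup>2) = (\<Sum>t\<in>T. (a t)\<^sup>2)"
    using sum_sq(2) T indep noise_moments by (simp add: power_mult_distrib)
qed

lemma trace_noise_mean_eq_combination:
  "trace_XYt m (p m) (noise_mean m \<omega>) a
     = (\<Sum>t\<in>noise_index m. (case t of (k, i, j) \<Rightarrow> a i j / n) * noise m t \<omega>)"
  by (simp add: trace_XYt_def noise_mean_def sum_noise_index noise_def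
      sum_divide_distrib sum_distrib_left mult.commute)

lemma trace_noise_mean_second_moment:
  shows "integrable M (\<lambda>\<omega>. (trace_XYt m (p m) (noise_mean m \<omega>) a)\<^sup>2)"
    and "expectation (\<lambda>\<omega>. (trace_XYt m (p m) (noise_mean m \<omega>) a)\<^sup>2) = trace_XYt m (p m) a a / n"
proof -
  note combination = noise_combination_second_moment[OF order_refl,
      where a = "\<lambda>t. case t of (k, i, j) \<Rightarrow> a i j / n" and m = m]
  have "(\<Sum>t\<in>noise_index m. (case t of (k, i, j) \<Rightarrow> a i j / n)\<^sup>2) = trace_XYt m (p m) a a / n"
    using n_pos by (simp add: sum_noise_index trace_XYt_def sum_divide_distrib power2_eq_square)
  then show "integrable M (\<lambda>\<omega>. (trace_XYt m (p m) (noise_mean m \<omega>) a)\<^sup>2)"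
    and "expectation (\<lambda>\<omega>. (trace_XYt m (p m) (noise_mean m \<omega>) a)\<^sup>2) = trace_XYt m (p m) a a / n"
    using combination by (simp_all add: trace_noise_mean_eq_combination)
qed

lemma noise_mean_eq_block_sum:
  "noise_mean m \<omega> i j = (\<Sum>t\<in>{..<n} \<times> {(i, j)}. noise m t \<omega> / n)"
proof -
  have "{..<n} \<times> {(i, j)} = (\<lambda>k. (k, i, j)) ` {..<n}"
    by auto
  then show ?thesis
    by (simp add: noise_mean_def noise_def sum_divide_distrib sum.reindex inj_on_def)
qed

lemma noise_mean_moments:
  assumes "i < m" "j < p m"
  shows "integrable M (\<lambda>\<omega>. (noise_mean m \<omega> i j)\<^sup>2)"
    and "expectation (\<lambda>\<omega>. (noise_mean m \<omega> i j)\<^sup>2) = 1 / n"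
    and "integrable M (\<lambda>\<omega>. (noise_mean m \<omega> i j) ^ 4)"
    and "expectation (\<lambda>\<omega>. (noise_mean m \<omega> i j) ^ 4) \<le> expectation (\<lambda>x. (\<xi> x) ^ 4)"
proof -
  have block: "{..<n} \<times> {(i, j)} \<subseteq> noise_index m"
    using assms by (auto simp: noise_index_def)
  note combination = noise_combination_second_moment[OF block, where a = "\<lambda>_. 1 / n"]
  show "integrable M (\<lambda>\<omega>. (noise_mean m \<omega> i j)\<^sup>2)"
    and "expectation (\<lambda>\<omega>. (noise_mean m \<omega> i j)\<^sup>2) = 1 / n"
    using combination n_pos by (simp_all add: noise_mean_eq_block_sum power2_eq_square)
  have fourth: "integrable M (\<lambda>\<omega>. (E m k i j \<omega>) ^ 4)"
    "expectation (\<lambda>\<omega>. (E m k i j \<omega>) ^ 4) = expectation (\<lambda>x. (\<xi> x) ^ 4)" if "k < n" for k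
    using noise_moments(5,6)[of "(k, i, j)" m] that assms by (simp_all add: noise_index_def noise_def)
  have bound: "(noise_mean m \<omega> i j) ^ 4 \<le> (\<Sum>k<n. (E m k i j \<omega>) ^ 4) / n" for \<omega>
    using mean_power4_le[of "\<lambda>k. E m k i j \<omega>" "{..<n}"] by (simp add: noise_mean_def)
  have bound_integrable: "integrable M (\<lambda>\<omega>. (\<Sum>k<n. (E m k i j \<omega>) ^ 4) / n)"
    using fourth by (intro integrable_divide Bochner_Integration.integrable_sum) auto
  show fourth_integrable: "integrable M (\<lambda>\<omega>. (noise_mean m \<omega> i j) ^ 4)"
    using bound by (intro Bochner_Integration.integrable_bound[OF bound_integrable])
      (simp_all add: abs_of_nonneg sum_nonneg)
  have "expectation (\<lambda>\<omega>. (noise_mean m \<omega> i j) ^ 4)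
      \<le> expectation (\<lambda>\<omega>. (\<Sum>k<n. (E m k i j \<omega>) ^ 4) / n)"
    by (rule integral_mono[OF fourth_integrable bound_integrable bound])
  also have "\<dots> = expectation (\<lambda>x. (\<xi> x) ^ 4)"
    using fourth n_pos by simp
  finally show "expectation (\<lambda>\<omega>. (noise_mean m \<omega> i j) ^ 4) \<le> expectation (\<lambda>x. (\<xi> x) ^ 4)" .
qed

lemma noise_mean_sq_deviation_moments:
  assumes "i < m" "j < p m"
  shows "integrable M (\<lambda>\<omega>. (noise_mean m \<omega> i j)\<^sup>2 - 1 / n)"
    and "expectation (\<lambda>\<omega>. (noise_mean m \<omega> i j)\<^sup>2 - 1 / n) = 0"
    and "integrable M (\<lambda>\<omega>. ((noise_mean m \<omega> i j)\<^sup>2 - 1 / n)\<^sup>2)"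
    and "expectation (\<lambda>\<omega>. ((noise_mean m \<omega> i j)\<^sup>2 - 1 / n)\<^sup>2) \<le> expectation (\<lambda>x. (\<xi> x) ^ 4)"
proof -
  note moments = noise_mean_moments[OF assms]
  show "integrable M (\<lambda>\<omega>. (noise_mean m \<omega> i j)\<^sup>2 - 1 / n)"
    and "expectation (\<lambda>\<omega>. (noise_mean m \<omega> i j)\<^sup>2 - 1 / n) = 0"
    using moments(1,2) by (simp_all add: prob_space)
  have expand: "(\<lambda>\<omega>. ((noise_mean m \<omega> i j)\<^sup>2 - 1 / n)\<^sup>2)
      = (\<lambda>\<omega>. (noise_mean m \<omega> i j) ^ 4 - 2 / n * (noise_mean m \<omega> i j)\<^sup>2 + (1 / n)\<^sup>2)"
    by (simp add: fun_eq_iff power2_eq_square power4_eq_xxxx algebra_simps)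
  show "integrable M (\<lambda>\<omega>. ((noise_mean m \<omega> i j)\<^sup>2 - 1 / n)\<^sup>2)"
    unfolding expand using moments by simp
  have "expectation (\<lambda>\<omega>. ((noise_mean m \<omega> i j)\<^sup>2 - 1 / n)\<^sup>2)
      = expectation (\<lambda>\<omega>. (noise_mean m \<omega> i j) ^ 4) - (1 / n)\<^sup>2"
    unfolding expand using moments by (simp add: prob_space power2_eq_square)
  also have "\<dots> \<le> expectation (\<lambda>x. (\<xi> x) ^ 4)"
    using moments(4) zero_le_power2[of "1 / real n"] by linarith
  finally show "expectation (\<lambda>\<omega>. ((noise_mean m \<omega> i j)\<^sup>2 - 1 / n)\<^sup>2) \<le> expectation (\<lambda>x. (\<xi> x) ^ 4)" .
qed

lemma indep_noise_mean_entries: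
  assumes "i < m" "j < p m" "i' < m" "j' < p m" "(i, j) \<noteq> (i', j')"
    and [measurable]: "f \<in> borel_measurable borel" "g \<in> borel_measurable borel"
  shows "indep_var borel (\<lambda>\<omega>. f (noise_mean m \<omega> i j)) borel (\<lambda>\<omega>. g (noise_mean m \<omega> i' j'))"
proof -
  define block_mean where
    "block_mean i j v = (\<Sum>k<n. v (k, i, j)) / n" for i j and v :: "nat \<times> nat \<times> nat \<Rightarrow> real"
  have "indep_var borel (\<lambda>\<omega>. f (block_mean i j (\<lambda>t\<in>{..<n} \<times> {(i, j)}. noise m t \<omega>)))
      borel (\<lambda>\<omega>. g (block_mean i' j' (\<lambda>t\<in>{..<n} \<times> {(i', j')}. noise m t \<omega>)))"
    using assms unfolding block_mean_def
    by (intro indep_noise_blocks[where f = "\<lambda>v. f (block_mean i j v)" and g = "\<lambda>v. g (block_mean i' j' v)"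
        for f g, unfolded block_mean_def]) (auto simp: noise_index_def)
  moreover have "block_mean a b (\<lambda>t\<in>{..<n} \<times> {(a, b)}. noise m t \<omega>) = noise_mean m \<omega> a b"
    for a b \<omega>
    by (simp add: block_mean_def noise_mean_def noise_def)
  ultimately show ?thesis
    by simp
qed

lemma trace_noise_mean_self_deviation_second_moment:
  shows "integrable M (\<lambda>\<omega>. (trace_XYt m (p m) (noise_mean m \<omega>) (noise_mean m \<omega>)
                               - real m * real (p m) / n)\<^sup>2)"
    and "expectation (\<lambda>\<omega>. (trace_XYt m (p m) (noise_mean m \<omega>) (noise_mean m \<omega>)
                               - real m * real (p m) / n)\<^sup>2)
           \<le> real m * real (p m) * expectation (\<lambda>x. (\<xi> x) ^ 4)"
proof -
  define J where "J = {..<m} \<times> {..<p m}"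
  define Y where "Y = (\<lambda>(i, j) \<omega>. (noise_mean m \<omega> i j)\<^sup>2 - 1 / n)"
  have trace_eq: "trace_XYt m (p m) (noise_mean m \<omega>) (noise_mean m \<omega>) - real m * real (p m) / n
      = (\<Sum>t\<in>J. Y t \<omega>)" for \<omega>
    by (simp add: J_def Y_def trace_XYt_def sum.cartesian_product' sum_subtractf
        power2_eq_square)
  have moments: "integrable M (Y t)" "expectation (Y t) = 0" "integrable M (\<lambda>\<omega>. (Y t \<omega>)\<^sup>2)"
    "expectation (\<lambda>\<omega>. (Y t \<omega>)\<^sup>2) \<le> expectation (\<lambda>x. (\<xi> x) ^ 4)" if "t \<in> J" for t
    using that noise_mean_sq_deviation_moments by (auto simp: J_def Y_def)
  have indep: "indep_var borel (Y s) borel (Y t)" if "s \<in> J" "t \<in> J" "s \<noteq> t" for s t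
  proof -
    obtain i j i' j' where "s = (i, j)" "t = (i', j')"
      by fastforce
    then show ?thesis
      using that indep_noise_mean_entries[of i m j i' j' "\<lambda>x. x\<^sup>2 - 1 / n" "\<lambda>x. x\<^sup>2 - 1 / n"]
      by (simp add: J_def Y_def)
  qed
  note sum_sq = expectation_square_sum_indep_centered[of J Y]
  show "integrable M (\<lambda>\<omega>. (trace_XYt m (p m) (noise_mean m \<omega>) (noise_mean m \<omega>)
                               - real m * real (p m) / n)\<^sup>2)"
    unfolding trace_eq using sum_sq(1) moments indep by (simp add: J_def)
  have "expectation (\<lambda>\<omega>. (\<Sum>t\<in>J. Y t \<omega>)\<^sup>2) = (\<Sum>t\<in>J. expectation (\<lambda>\<omega>. (Y t \<omega>)\<^sup>2))"
    using sum_sq(2) moments indep by (simp add: J_def)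
  also have "\<dots> \<le> real (card J) * expectation (\<lambda>x. (\<xi> x) ^ 4)"
    using moments(4) by (rule sum_bounded_above)
  finally show "expectation (\<lambda>\<omega>. (trace_XYt m (p m) (noise_mean m \<omega>) (noise_mean m \<omega>)
                               - real m * real (p m) / n)\<^sup>2)
           \<le> real m * real (p m) * expectation (\<lambda>x. (\<xi> x) ^ 4)"
    unfolding trace_eq by (simp add: J_def)
qed

lemma trace_noise_mean_AE_tendsto_zero:
  assumes dims: "summable (\<lambda>m. 1 / (real m * real (p m)))"
    and bounded: "\<And>m. m > 0 \<Longrightarrow> trace_XYt m (p m) (a m) (a m) / (real m * real (p m)) \<le> K"
  shows "AE \<omega> in M. (\<lambda>m. trace_XYt m (p m) (noise_mean m \<omega>) (a m) / (real m * real (p m))) \<longlonglongrightarrow> 0"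
proof (rule AE_tendsto_zero_if_summable_second_moments)
  let ?d = "\<lambda>m. real m * real (p m)"
  fix m
  show "(\<lambda>\<omega>. trace_XYt m (p m) (noise_mean m \<omega>) (a m) / ?d m) \<in> borel_measurable M"
    unfolding trace_XYt_def by measurable
  show "integrable M (\<lambda>\<omega>. (trace_XYt m (p m) (noise_mean m \<omega>) (a m) / ?d m)\<^sup>2)"
    using trace_noise_mean_second_moment(1) by (simp add: power_divide)
next
  let ?d = "\<lambda>m. real m * real (p m)"
  show "summable (\<lambda>m. expectation (\<lambda>\<omega>. (trace_XYt m (p m) (noise_mean m \<omega>) (a m) / ?d m)\<^sup>2))"
  proof (rule summable_comparison_test_ev)
    show "eventually (\<lambda>m. norm (expectation (\<lambda>\<omega>. (trace_XYt m (p m) (noise_mean m \<omega>) (a m) / ?d m)\<^sup>2))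
        \<le> K / n * (1 / ?d m)) sequentially"
      using eventually_gt_at_top[of 0]
    proof eventually_elim
      case (elim m)
      have "expectation (\<lambda>\<omega>. (trace_XYt m (p m) (noise_mean m \<omega>) (a m) / ?d m)\<^sup>2)
          = trace_XYt m (p m) (a m) (a m) / ?d m * (1 / ?d m) / n"
        using trace_noise_mean_second_moment(2) by (simp add: power_divide power2_eq_square)
      also have "\<dots> \<le> K * (1 / ?d m) / n"
        using bounded[OF elim] by (intro divide_right_mono mult_right_mono) auto
      finally show ?case
        by (simp add: integral_nonneg_AE ac_simps)
    qed
    show "summable (\<lambda>m. K / n * (1 / ?d m))"
      using dims by (rule summable_mult)
  qed
qed

lemma trace_noise_mean_self_AE_tendsto:
  assumes dims: "summable (\<lambda>m. 1 / (real m * real (p m)))"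
    and p_unbounded: "filterlim p at_top sequentially"
  shows "AE \<omega> in M. (\<lambda>m. trace_XYt m (p m) (noise_mean m \<omega>) (noise_mean m \<omega>)
                             / (real m * real (p m))) \<longlonglongrightarrow> 1 / n"
proof -
  let ?d = "\<lambda>m. real m * real (p m)"
  define D where "D m \<omega> = trace_XYt m (p m) (noise_mean m \<omega>) (noise_mean m \<omega>) - ?d m / n" for m \<omega>
  have positive: "eventually (\<lambda>m. m > 0 \<and> p m > 0) sequentially"
  proof -
    have "eventually (\<lambda>m. p m \<ge> 1) sequentially"
      using p_unbounded by (simp add: filterlim_at_top)
    then show ?thesis
      using eventually_gt_at_top[of 0] by eventually_elim auto
  qed
  have "AE \<omega> in M. (\<lambda>m. D m \<omega> / ?d m) \<longlonglongrightarrow> 0"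
  proof (rule AE_tendsto_zero_if_summable_second_moments)
    fix m
    show "(\<lambda>\<omega>. D m \<omega> / ?d m) \<in> borel_measurable M"
      unfolding D_def trace_XYt_def by measurable
    show "integrable M (\<lambda>\<omega>. (D m \<omega> / ?d m)\<^sup>2)"
      using trace_noise_mean_self_deviation_second_moment(1) by (simp add: D_def power_divide)
  next
    have bound: "expectation (\<lambda>\<omega>. (D m \<omega> / ?d m)\<^sup>2) \<le> expectation (\<lambda>x. (\<xi> x) ^ 4) * (1 / ?d m)"
      for m
    proof -
      have "expectation (\<lambda>\<omega>. (D m \<omega> / ?d m)\<^sup>2) = expectation (\<lambda>\<omega>. (D m \<omega>)\<^sup>2) / (?d m)\<^sup>2"
        by (simp add: power_divide)
      also have "\<dots> \<le> ?d m * expectation (\<lambda>x. (\<xi> x) ^ 4) / (?d m)\<^sup>2"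
        using trace_noise_mean_self_deviation_second_moment(2) by (intro divide_right_mono) (simp_all add: D_def)
      also have "\<dots> = expectation (\<lambda>x. (\<xi> x) ^ 4) * (1 / ?d m)"
        by (simp add: power2_eq_square)
      finally show ?thesis .
    qed
    show "summable (\<lambda>m. expectation (\<lambda>\<omega>. (D m \<omega> / ?d m)\<^sup>2))"
      by (rule summable_comparison_test'[OF summable_mult[OF dims]])
        (use bound in \<open>simp add: integral_nonneg_AE\<close>)
  qed
  then show ?thesis
  proof eventually_elim
    case (elim \<omega>)
    have "(\<lambda>m. D m \<omega> / ?d m + 1 / n) \<longlonglongrightarrow> 1 / n"
      using tendsto_add[OF elim tendsto_const] by simp
    then show ?case
      by (rule Lim_transform_eventually)
        (use positive in \<open>auto elim!: eventually_mono simp: D_def diff_divide_distrib\<close>)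
  qed
qed

end

theorem theorem2:
  fixes M :: "'a measure"
    and p :: "nat \<Rightarrow> nat" and c :: real
    and A :: "nat \<Rightarrow> nat \<Rightarrow> nat \<Rightarrow> real"
    and n :: nat and \<sigma> :: real
    and E :: "nat \<Rightarrow> nat \<Rightarrow> nat \<Rightarrow> nat \<Rightarrow> 'a \<Rightarrow> real"
    and \<xi> :: "'a \<Rightarrow> real"
    and B :: real
  assumes "prob_space M"
    and c_pos: "c > 0"
    and ratio: "(\<lambda>m. real m / real (p m)) \<longlonglongrightarrow> c"
    and p_inf: "filterlim p at_top sequentially"
    and A_nonneg: "\<And>m i j. i < m \<Longrightarrow> j < p m \<Longrightarrow> A m i j \<ge> 0"
    and A_bdd: "\<And>m. m > 0 \<Longrightarrow> trace_XYt m (p m) (A m) (A m) / (real m * real (p m)) \<le> B"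
    and n_ge: "n \<ge> 2"
    and sigma_pos: "\<sigma> > 0"
    and \<xi>_rv: "\<xi> \<in> borel_measurable M"
    and \<xi>_mean: "integrable M \<xi>" "prob_space.expectation M \<xi> = 0"
    and \<xi>_var: "integrable M (\<lambda>x. (\<xi> x)\<^sup>2)" "prob_space.expectation M (\<lambda>x. (\<xi> x)\<^sup>2) = 1"
    and \<xi>_4th: "integrable M (\<lambda>x. (\<xi> x) ^ 4)"
    and E_rv: "\<And>m k i j. E m k i j \<in> borel_measurable M"
    and E_distr: "\<And>m k i j. k < n \<Longrightarrow> i < m \<Longrightarrow> j < p m \<Longrightarrow>
                    distr M borel (E m k i j) = distr M borel \<xi>"
    and E_indep: "\<And>m. prob_space.indep_vars M (\<lambda>_. borel) (\<lambda>(k, i, j). E m k i j)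
                          ({..<n} \<times> {..<m} \<times> {..<p m})"
  defines "Abar \<equiv> (\<lambda>m \<omega> i j. (1 / real n) * (\<Sum>k<n. A m i j + \<sigma> * E m k i j \<omega>))"
  shows "AE \<omega> in M.
           ((\<lambda>m. \<bar>trace_XYt m (p m) (Abar m \<omega>) ones_mat / (real m * real (p m))
                  - trace_XYt m (p m) (A m) ones_mat / (real m * real (p m))\<bar>) \<longlonglongrightarrow> 0)
         \<and> ((\<lambda>m. \<bar>trace_XYt m (p m) (Abar m \<omega>) (A m) / (real m * real (p m))
                  - trace_XYt m (p m) (A m) (A m) / (real m * real (p m))\<bar>) \<longlonglongrightarrow> 0)
         \<and> ((\<lambda>m. \<bar>trace_XYt m (p m) (Abar m \<omega>) (Abar m \<omega>) / (real m * real (p m))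
                  - trace_XYt m (p m) (A m) (A m) / (real m * real (p m)) - \<sigma>\<^sup>2 / real n\<bar>) \<longlonglongrightarrow> 0)"
proof -
  interpret iid_noise M n p E \<xi>
    using n_ge \<xi>_rv \<xi>_mean \<xi>_var \<xi>_4th E_rv E_distr E_indep
    by (intro iid_noise.intro[OF assms(1)] iid_noise_axioms.intro) simp_all
  let ?d = "\<lambda>m. real m * real (p m)"
  have dims: "summable (\<lambda>m. 1 / ?d m)"
    using ratio by (rule summable_inverse_mult_if_ratio_converges)
  have Abar_eq: "Abar m \<omega> = (\<lambda>i j. A m i j + \<sigma> * noise_mean m \<omega> i j)" for m \<omega>
    using n_pos by (simp add: Abar_def noise_mean_def sum.distrib sum_distrib_left field_simps)
  have ones_bounded: "trace_XYt m (p m) ones_mat ones_mat / ?d m \<le> 1" for m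
    by (simp add: trace_XYt_def ones_mat_def)
  have linear_diff: "trace_XYt m (p m) (Abar m \<omega>) Z / ?d m - trace_XYt m (p m) (A m) Z / ?d m
      = \<sigma> * (trace_XYt m (p m) (noise_mean m \<omega>) Z / ?d m)" for m \<omega> Z
    by (simp add: Abar_eq trace_XYt_add_scaled_left add_divide_distrib)
  have quadratic_diff: "trace_XYt m (p m) (Abar m \<omega>) (Abar m \<omega>) / ?d m
        - trace_XYt m (p m) (A m) (A m) / ?d m - \<sigma>\<^sup>2 / n
      = 2 * \<sigma> * (trace_XYt m (p m) (noise_mean m \<omega>) (A m) / ?d m)
        + \<sigma>\<^sup>2 * (trace_XYt m (p m) (noise_mean m \<omega>) (noise_mean m \<omega>) / ?d m - 1 / n)" for m \<omega>
    unfolding Abar_eq trace_XYt_add_scaled_square add_divide_distrib by (simp add: algebra_simps)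
  have "AE \<omega> in M. (\<lambda>m. trace_XYt m (p m) (noise_mean m \<omega>) ones_mat / ?d m) \<longlonglongrightarrow> 0"
    using dims ones_bounded by (rule trace_noise_mean_AE_tendsto_zero)
  moreover have "AE \<omega> in M. (\<lambda>m. trace_XYt m (p m) (noise_mean m \<omega>) (A m) / ?d m) \<longlonglongrightarrow> 0"
    using dims A_bdd by (rule trace_noise_mean_AE_tendsto_zero)
  moreover have "AE \<omega> in M.
      (\<lambda>m. trace_XYt m (p m) (noise_mean m \<omega>) (noise_mean m \<omega>) / ?d m - 1 / n) \<longlonglongrightarrow> 0"
    using trace_noise_mean_self_AE_tendsto[OF dims p_inf] by eventually_elim (rule LIM_zero)
  ultimately show ?thesis
  proof eventually_elim
    case (elim \<omega>)
    then show ?case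
      unfolding linear_diff quadratic_diff
      by (intro conjI tendsto_rabs_zero tendsto_add_zero tendsto_mult_right_zero)
  qed
qed

end
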